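(* Let $u=s_{i_1}\cdots s_{i_l}$ and $v=s_{j_1}\cdots s_{j_m}$ (both nonempty) be reduced words for glides in $\hat S_n$, $v$ of offset $k_2$, with $vu$ reduced, and let $\alpha_1,\dots,\alpha_n\in\mathbb R$ satisfy $\alpha_i<\alpha_j$ whenever $i\triangleleft j$ in the wiring diagram of $v|u$. Let $\tilde v=\rho^{-k_2}(v)$ with reduced word $s_{j_1-k_2}\cdots s_{j_m-k_2}$, and let $(t_1,\dots,t_n)$, $(t'_1,\dots,t'_n)$ be representatives of $t(u)$ and $t(\tilde v)$. Let $b\neq c$ be real numbers in the same connected component of $\mathbb R\setminus\{\alpha_1,\dots,\alpha_n\}$ with $f(b)=f(c)$ where $f(t)=\prod_j(t-\alpha_j)$ (a $1$-soliton), and $B_j=\frac{b-\alpha_j}{c-\alpha_j}$. Then the speed $$p=\frac{t'_1\log B_1+\dots+t'_n\log B_n}{t_1\log B_1+\dots+t_n\log B_n}$$ is positive.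
   Context: $\hat S_n$: generators $s_0,\dots,s_{n-1}$ (indices mod $n$), relations $s_i^2=1$, $s_is_js_i=s_js_is_j$ if $i-j\equiv\pm1$, $s_is_j=s_js_i$ if $i-j\not\equiv0,\pm1$; $\rho$ is the automorphism $s_i\mapsto s_{i+1}$. $\phi:\hat S_n\to S_n$, $s_i\mapsto(i\ i+1)$, $s_0\mapsto(1\ n)$; a glide of offset $k$ is $g$ with $\phi(g)(j)\equiv j+k\pmod n$. Wiring diagram: letters drawn left to right on a cylinder with wires in positions $1,\dots,n$ (mod $n$), $s_i$ a crossing of positions $i,i+1$ ($s_0$: $n$ and $1$); the upper wire of $s_i$ passes from position $i+1$ to $i$ (for $s_0$ from $1$ to $n$). In the diagram of $v|u$, wire $i$ is the wire in position $i$ at the cut between $v$ and $u$; $i\triangleleft j$ means wires $i,j$ cross with $j$ the upper wire. Trajectory of a glide $g$ with a reduced word: lift the diagram of $|g$ to the universal cover (integer positions, wires labelled by starting position); a chamber with set $S$ of underlying wire labels has label $(\mathbf s_i)$, $\mathbf s_i=\lceil\max\{b\in S:b\equiv i\bmod n\}/n\rceil$; $t(g)\in\mathbb Z^n/\mathbb Z(1,\dots,1)$ is the label of the chamber directly above wire $1$ at the right end minus that at the left end. *)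

theory Defs
  imports "HOL-Analysis.Analysis"
begin

(* Words in the generators s_0,...,s_{n-1} of the affine symmetric group are
   lists of natural numbers a < n (the letter a stands for s_a), read left to right. *)

definition letters_ok :: "nat \<Rightarrow> nat list \<Rightarrow> bool" where
  "letters_ok n w \<longleftrightarrow> (\<forall>a\<in>set w. a < n)"

definition adj_idx :: "nat \<Rightarrow> nat \<Rightarrow> nat \<Rightarrow> bool" where
  "adj_idx n i j \<longleftrightarrow> (i + 1) mod n = j mod n \<or> (j + 1) mod n = i mod n"

inductive word_move :: "nat \<Rightarrow> nat list \<Rightarrow> nat list \<Rightarrow> bool" for n where
  square: "word_move n (xs @ [i, i] @ ys) (xs @ ys)"
| braid: "adj_idx n i j \<Longrightarrow> word_move n (xs @ [i, j, i] @ ys) (xs @ [j, i, j] @ ys)"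
| comm: "i \<noteq> j \<Longrightarrow> \<not> adj_idx n i j \<Longrightarrow> word_move n (xs @ [i, j] @ ys) (xs @ [j, i] @ ys)"

definition word_equiv :: "nat \<Rightarrow> nat list \<Rightarrow> nat list \<Rightarrow> bool" where
  "word_equiv n = equivclp (word_move n)"

definition reduced_word :: "nat \<Rightarrow> nat list \<Rightarrow> bool" where
  "reduced_word n w \<longleftrightarrow> letters_ok n w \<and>
     (\<forall>w'. letters_ok n w' \<and> word_equiv n w w' \<longrightarrow> length w \<le> length w')"

(* the homomorphism \<phi> : \<hat>S_n \<rightarrow> S_n on {1..n}; \<phi>(s_{i1} ... s_{il}) = \<phi>(s_{i1}) o ... o \<phi>(s_{il}) *)
definition swap_pts :: "nat \<Rightarrow> nat \<Rightarrow> nat \<Rightarrow> nat" where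
  "swap_pts x y p = (if p = x then y else if p = y then x else p)"

definition lo_pos :: "nat \<Rightarrow> nat \<Rightarrow> nat" where
  "lo_pos n a = (if a = 0 then n else a)"

definition hi_pos :: "nat \<Rightarrow> nat" where
  "hi_pos a = a + 1"

definition phi_gen :: "nat \<Rightarrow> nat \<Rightarrow> nat \<Rightarrow> nat" where
  "phi_gen n a = swap_pts (lo_pos n a) (hi_pos a)"

definition phi :: "nat \<Rightarrow> nat list \<Rightarrow> nat \<Rightarrow> nat" where
  "phi n w = foldr (\<lambda>a f. phi_gen n a \<circ> f) w id"

definition glide :: "nat \<Rightarrow> nat list \<Rightarrow> int \<Rightarrow> bool" where
  "glide n w k \<longleftrightarrow> (\<forall>j\<in>{1..n}. int (phi n w j) mod int n = (int j + k) mod int n)"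

(* \<rho>^{-k}: the word s_{j_1-k} ... s_{j_m-k} *)
definition rho_shift :: "nat \<Rightarrow> int \<Rightarrow> nat list \<Rightarrow> nat list" where
  "rho_shift n k w = map (\<lambda>j. nat ((int j - k) mod int n)) w"

(* Wiring diagram on the cylinder, positions 1..n.  A configuration c maps a position
   to the wire occupying it.  Letter a crosses positions lo_pos n a and hi_pos a;
   the upper wire passes from hi_pos a (left) to lo_pos n a (right).
   A pair (x, y) records a crossing of wires x and y with y the upper wire. *)
fun cross_right :: "nat \<Rightarrow> (nat \<Rightarrow> nat) \<Rightarrow> nat list \<Rightarrow> (nat \<times> nat) set" where
  "cross_right n c [] = {}"
| "cross_right n c (a # w) =
     insert (c (lo_pos n a), c (hi_pos a))
       (cross_right n (c \<circ> swap_pts (lo_pos n a) (hi_pos a)) w)"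

(* going leftwards from the cut: c is the configuration to the right of the letter *)
fun cross_left :: "nat \<Rightarrow> (nat \<Rightarrow> nat) \<Rightarrow> nat list \<Rightarrow> (nat \<times> nat) set" where
  "cross_left n c [] = {}"
| "cross_left n c (a # w) =
     insert (c (hi_pos a), c (lo_pos n a))
       (cross_left n (c \<circ> swap_pts (lo_pos n a) (hi_pos a)) w)"

(* i \<triangleleft> j in the wiring diagram of v|u (wire i = wire in position i at the cut) *)
definition wire_tri :: "nat \<Rightarrow> nat list \<Rightarrow> nat list \<Rightarrow> nat \<Rightarrow> nat \<Rightarrow> bool" where
  "wire_tri n v u i j \<longleftrightarrow> (i, j) \<in> cross_right n id u \<union> cross_left n id (rev v)"

(* Universal cover: integer positions; letter a crosses positions q, q+1 for all q \<equiv> a mod n. *)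
definition cover_step :: "nat \<Rightarrow> nat \<Rightarrow> int \<Rightarrow> int" where
  "cover_step n a p =
     (if p mod int n = int a mod int n then p + 1
      else if p mod int n = (int a + 1) mod int n then p - 1 else p)"

(* final position of the lifted wire starting at position b *)
definition end_pos :: "nat \<Rightarrow> nat list \<Rightarrow> int \<Rightarrow> int" where
  "end_pos n w b = foldl (\<lambda>p a. cover_step n a p) b w"

(* label of a chamber whose set of underlying wire labels is S *)
definition chamber_label :: "nat \<Rightarrow> int set \<Rightarrow> nat \<Rightarrow> int" where
  "chamber_label n S i =
     \<lceil>real_of_int (GREATEST b. b \<in> S \<and> b mod int n = int i mod int n) / real n\<rceil>"

(* (t_1,...,t_n) is a representative of t(g) \<in> Z^n / Z(1,...,1), g given by the word w *)
definition traj_rep :: "nat \<Rightarrow> nat list \<Rightarrow> (nat \<Rightarrow> int) \<Rightarrow> bool" where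
  "traj_rep n w t \<longleftrightarrow> (\<exists>c::int. \<forall>i\<in>{1..n}.
      t i = chamber_label n {b. end_pos n w b \<le> end_pos n w 1} i
            - chamber_label n {b. b \<le> 1} i + c)"

end

theory Submission
  imports Defs
begin

text \<open>
  For a glide \<open>g\<close> the displacement \<open>e(p) - p\<close> of the lifted wire starting at \<open>p\<close> is
  constant modulo \<open>n\<close>, and the trajectory measures it in units of \<open>n\<close>:
  \<open>n (t\<^sub>i - t\<^sub>j) = (e(j) - j) - (e(i) - i)\<close>. If \<open>t\<^sub>j < t\<^sub>i\<close>, the copy of wire \<open>i\<close>
  starting just above wire \<open>j\<close> ends below it, so wire \<open>i\<close> crosses over wire \<open>j\<close>, and the
  hypothesis on the wiring diagram of \<open>v|u\<close> gives \<open>\<alpha>\<^sub>j < \<alpha>\<^sub>i\<close>: the trajectory is weakly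
  increasing in \<open>\<alpha>\<close>. This applies to \<open>u\<close> and, read leftwards from the cut, to
  \<open>\<rho>^{-k}(v)\<close>. Neither trajectory is constant, since otherwise the glide would be a translation
  and the two wires crossed by its first letter would have to cross back.

  On the analytic side, \<open>f(b) = f(c)\<close> says exactly that the weights \<open>log B\<^sub>j\<close> sum to zero;
  for \<open>b < c\<close> they are negative for \<open>\<alpha>\<^sub>j < b\<close> and positive for \<open>\<alpha>\<^sub>j > c\<close>. Subtracting a
  threshold value from a nonconstant weakly increasing trajectory makes every term of the weighted
  sum nonnegative and one positive, so both sums are positive (both negative if \<open>c < b\<close>).
\<close>

section \<open>Positions on the cylinder and its universal cover\<close>

definition cyl_pos :: "nat \<Rightarrow> int \<Rightarrow> nat" where
  "cyl_pos n p = nat ((p - 1) mod int n) + 1"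

lemma cyl_pos_eq_iff:
  assumes "0 < n"
  shows "cyl_pos n p = x \<longleftrightarrow> 1 \<le> x \<and> x \<le> n \<and> int x mod int n = p mod int n"
proof -
  have bounds: "0 \<le> (p - 1) mod int n" "(p - 1) mod int n < int n" using assms by auto
  show ?thesis
  proof
    assume "cyl_pos n p = x"
    then have x: "int x = (p - 1) mod int n + 1" using bounds unfolding cyl_pos_def by auto
    have "int x mod int n = p mod int n"
      unfolding x by (metis add.commute diff_add_cancel mod_add_right_eq)
    then show "1 \<le> x \<and> x \<le> n \<and> int x mod int n = p mod int n" using x bounds by auto
  next
    assume x: "1 \<le> x \<and> x \<le> n \<and> int x mod int n = p mod int n"
    then have "(int x - 1) mod int n = (p - 1) mod int n" by (metis mod_diff_left_eq)
    moreover have "(int x - 1) mod int n = int x - 1" using x by (intro mod_pos_pos_trivial) auto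
    ultimately show "cyl_pos n p = x" unfolding cyl_pos_def using x by auto
  qed
qed

lemma cyl_pos_range:
  "0 < n \<Longrightarrow> 1 \<le> cyl_pos n p \<and> cyl_pos n p \<le> n \<and> int (cyl_pos n p) mod int n = p mod int n"
  using cyl_pos_eq_iff by blast

lemma cyl_pos_of_nat: "1 \<le> i \<Longrightarrow> i \<le> n \<Longrightarrow> cyl_pos n (int i) = i"
  using cyl_pos_eq_iff by simp

lemma cyl_pos_cong: "p mod int n = q mod int n \<Longrightarrow> cyl_pos n p = cyl_pos n q"
  unfolding cyl_pos_def by (metis mod_diff_left_eq)

lemma cyl_pos_lo: "a < n \<Longrightarrow> p mod int n = int a mod int n \<Longrightarrow> cyl_pos n p = lo_pos n a"
  unfolding lo_pos_def by (subst cyl_pos_eq_iff) (auto simp: zmod_int[symmetric])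

lemma cyl_pos_hi: "a < n \<Longrightarrow> p mod int n = (int a + 1) mod int n \<Longrightarrow> cyl_pos n p = hi_pos a"
  unfolding hi_pos_def by (subst cyl_pos_eq_iff) (auto simp: add.commute)

lemma succ_mod_neq:
  assumes "2 \<le> n" shows "(p + 1) mod int n \<noteq> p mod int n"
proof
  assume "(p + 1) mod int n = p mod int n"
  then have "int n dvd 1" using mod_eq_dvd_iff[of "p + 1" "int n" p] by simp
  then show False using assms by simp
qed

lemma mod_add_right_cancel: "(p + q) mod int n = (r + q) mod int n \<longleftrightarrow> p mod int n = r mod int n"
  by (metis add_diff_cancel_right' mod_add_left_eq mod_diff_left_eq)

lemma cover_step_involutive:
  assumes "2 \<le> n" shows "cover_step n a (cover_step n a p) = p"
proof -
  consider "p mod int n = int a mod int n" | "p mod int n = (int a + 1) mod int n"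
    | "p mod int n \<noteq> int a mod int n" "p mod int n \<noteq> (int a + 1) mod int n" by blast
  then show ?thesis
  proof cases
    case 1
    then have "(p + 1) mod int n = (int a + 1) mod int n" by (metis mod_add_left_eq)
    moreover have "(p + 1) mod int n \<noteq> int a mod int n" using 1 succ_mod_neq[OF assms, of p] by simp
    ultimately show ?thesis using 1 unfolding cover_step_def by simp
  next
    case 2
    then have "(p - 1) mod int n = int a mod int n"
      by (metis add_diff_cancel_right' mod_diff_left_eq)
    then show ?thesis using 2 succ_mod_neq[OF assms, of "int a"] unfolding cover_step_def by simp
  qed (simp add: cover_step_def)
qed

lemma cover_step_bounds: "p - 1 \<le> cover_step n a p \<and> cover_step n a p \<le> p + 1"
  unfolding cover_step_def by auto

lemma cover_step_eq_succ: "cover_step n a p = p + 1 \<Longrightarrow> p mod int n = int a mod int n"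
  unfolding cover_step_def by (auto split: if_splits)

lemma cover_step_periodic: "cover_step n a (p + m * int n) = cover_step n a p + m * int n"
  unfolding cover_step_def by auto

lemma cover_step_rho_shift:
  assumes "0 < n"
  shows "cover_step n (nat ((int j - k) mod int n)) p = cover_step n j (p + k) - k"
proof -
  define a where "a = nat ((int j - k) mod int n)"
  have a: "int a = (int j - k) mod int n" unfolding a_def using assms by auto
  have lo: "(p mod int n = int a mod int n) = ((p + k) mod int n = int j mod int n)"
    using mod_add_right_cancel[of p k n "int j - k"] unfolding a by simp
  have "(int a + 1) mod int n = (int j - k + 1) mod int n"
    unfolding a by (simp add: mod_add_left_eq)
  then have "(p mod int n = (int a + 1) mod int n) = ((p + k) mod int n = (int j + 1) mod int n)"
    using mod_add_right_cancel[of p k n "int j - k + 1"] by simp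
  with lo show ?thesis unfolding a_def[symmetric] cover_step_def by auto
qed

lemma cyl_pos_cover_step:
  assumes "2 \<le> n" "a < n"
  shows "cyl_pos n (cover_step n a p) = swap_pts (lo_pos n a) (hi_pos a) (cyl_pos n p)"
proof -
  have n: "0 < n" using assms by simp
  have lo_hi: "lo_pos n a \<noteq> hi_pos a" using assms unfolding lo_pos_def hi_pos_def by auto
  consider (lo) "p mod int n = int a mod int n" | (hi) "p mod int n = (int a + 1) mod int n"
    | (other) "p mod int n \<noteq> int a mod int n" "p mod int n \<noteq> (int a + 1) mod int n" by blast
  then show ?thesis
  proof cases
    case lo
    then have "(p + 1) mod int n = (int a + 1) mod int n" by (metis mod_add_left_eq)
    then show ?thesis using lo cyl_pos_lo[OF assms(2) lo] cyl_pos_hi[OF assms(2)]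
      unfolding cover_step_def swap_pts_def by simp
  next
    case hi
    then have "(p - 1) mod int n = int a mod int n"
      by (metis add_diff_cancel_right' mod_diff_left_eq)
    then show ?thesis using hi lo_hi cyl_pos_hi[OF assms(2) hi] cyl_pos_lo[OF assms(2)]
        succ_mod_neq[OF assms(1), of "int a"]
      unfolding cover_step_def swap_pts_def by simp
  next
    case other
    have "cyl_pos n p \<noteq> lo_pos n a" "cyl_pos n p \<noteq> hi_pos a"
      using other cyl_pos_range[OF n, of p] cyl_pos_lo[OF assms(2)] cyl_pos_hi[OF assms(2)]
      by (metis cyl_pos_eq_iff[OF n])+
    then show ?thesis using other unfolding cover_step_def swap_pts_def by simp
  qed
qed

lemma end_pos_Nil [simp]: "end_pos n [] p = p"
  unfolding end_pos_def by simp

lemma end_pos_Cons [simp]: "end_pos n (a # w) p = end_pos n w (cover_step n a p)"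
  unfolding end_pos_def by simp

lemma end_pos_append: "end_pos n (w1 @ w2) p = end_pos n w2 (end_pos n w1 p)"
  unfolding end_pos_def by simp

lemma end_pos_periodic: "end_pos n w (p + m * int n) = end_pos n w p + m * int n"
  by (induction w arbitrary: p) (auto simp: cover_step_periodic)

lemma end_pos_rev_inverse: "2 \<le> n \<Longrightarrow> end_pos n (rev w) (end_pos n w p) = p"
  by (induction w arbitrary: p) (auto simp: end_pos_append cover_step_involutive)

lemma end_pos_rho_shift: "0 < n \<Longrightarrow> end_pos n (rho_shift n k w) p = end_pos n w (p + k) - k"
  by (induction w arbitrary: p) (auto simp: rho_shift_def cover_step_rho_shift)

lemma phi_cyl_pos_end_pos:
  assumes "2 \<le> n" "letters_ok n w"
  shows "phi n w (cyl_pos n (end_pos n w p)) = cyl_pos n p"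
  using assms(2)
proof (induction w arbitrary: p)
  case Nil
  then show ?case unfolding phi_def by simp
next
  case (Cons a w)
  then have "a < n" "letters_ok n w" unfolding letters_ok_def by auto
  with Cons.IH show ?case
    unfolding phi_def by (simp add: phi_gen_def cyl_pos_cover_step[OF assms(1)] swap_pts_def)
qed

lemma glide_end_pos_mod:
  assumes "2 \<le> n" "letters_ok n w" "glide n w k"
  shows "(end_pos n w p + k) mod int n = p mod int n"
proof -
  have n: "0 < n" using assms by simp
  define j where "j = cyl_pos n (end_pos n w p)"
  have j: "j \<in> {1..n}" "int j mod int n = end_pos n w p mod int n"
    using cyl_pos_range[OF n] unfolding j_def by auto
  have "p mod int n = int (phi n w j) mod int n"
    using phi_cyl_pos_end_pos[OF assms(1,2)] cyl_pos_range[OF n, of p] unfolding j_def by simp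
  also have "\<dots> = (int j + k) mod int n" using assms(3) j(1) unfolding glide_def by blast
  also have "\<dots> = (end_pos n w p + k) mod int n" using j(2) by (metis mod_add_left_eq)
  finally show ?thesis by simp
qed

section \<open>Crossings of lifted wires\<close>

lemma letters_ok_rev [simp]: "letters_ok n (rev w) = letters_ok n w"
  unfolding letters_ok_def by simp

lemma swap_pts_involutive [simp]: "swap_pts x y (swap_pts x y z) = z"
  unfolding swap_pts_def by auto

lemma cross_right_of_inversion:
  assumes "2 \<le> n" "letters_ok n w" "x < y" "end_pos n w y < end_pos n w x"
  shows "(c (cyl_pos n x), c (cyl_pos n y)) \<in> cross_right n c w"
  using assms(2-4)
proof (induction w arbitrary: c x y)
  case Nil
  then show ?case by simp
next
  case (Cons a w)
  have a: "a < n" and w: "letters_ok n w" using Cons.prems(1) unfolding letters_ok_def by auto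
  define c' where "c' = c \<circ> swap_pts (lo_pos n a) (hi_pos a)"
  define x' where "x' = cover_step n a x"
  define y' where "y' = cover_step n a y"
  have c': "c' (cyl_pos n x') = c (cyl_pos n x)" "c' (cyl_pos n y') = c (cyl_pos n y)"
    unfolding c'_def x'_def y'_def cyl_pos_cover_step[OF assms(1) a] by simp_all
  have x'y': "x' \<noteq> y'"
    using Cons.prems(2) cover_step_involutive[OF assms(1), of a x] cover_step_involutive[OF assms(1), of a y]
    unfolding x'_def y'_def by auto
  show ?case
  proof (cases "x' < y'")
    case True
    then have "(c' (cyl_pos n x'), c' (cyl_pos n y')) \<in> cross_right n c' w"
      using Cons.IH[OF w] Cons.prems(3) unfolding x'_def y'_def by simp
    then show ?thesis using c' unfolding c'_def by simp
  next
    case False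
    \<comment> \<open>the letter \<open>a\<close> itself swaps the two wires\<close>
    then have "x' = x + 1" "y = x + 1"
      using x'y' cover_step_bounds[of x n a] cover_step_bounds[of y n a] Cons.prems(2)
      unfolding x'_def y'_def by auto
    then have "x mod int n = int a mod int n" "y mod int n = (int a + 1) mod int n"
      using cover_step_eq_succ unfolding x'_def by (blast, metis mod_add_left_eq cover_step_eq_succ)
    then show ?thesis using cyl_pos_lo[OF a] cyl_pos_hi[OF a] by simp
  qed
qed

lemma cross_left_eq_flip: "cross_left n c w = prod.swap ` cross_right n c w"
  by (induction w arbitrary: c) auto

lemma cross_left_rev_of_inversion:
  assumes "2 \<le> n" "letters_ok n w" "x < y" "end_pos n w y < end_pos n w x"
  shows "(cyl_pos n (end_pos n w x), cyl_pos n (end_pos n w y)) \<in> cross_left n id (rev w)"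
proof -
  have "(cyl_pos n (end_pos n w y), cyl_pos n (end_pos n w x)) \<in> cross_right n id (rev w)"
    using cross_right_of_inversion[OF assms(1), of "rev w" "end_pos n w y" "end_pos n w x" id]
      assms end_pos_rev_inverse[OF assms(1)] by simp
  then show ?thesis unfolding cross_left_eq_flip by force
qed

lemma translation_double_cross:
  assumes "2 \<le> n" "letters_ok n w" "w \<noteq> []" "\<And>p. end_pos n w p = p + d"
  shows "\<exists>x y. (x, y) \<in> cross_right n id w \<and> (y, x) \<in> cross_right n id w"
proof -
  obtain a w' where w: "w = a # w'" using assms(3) by (cases w) auto
  have a: "a < n" and w': "letters_ok n w'" using assms(2) unfolding w letters_ok_def by auto
  define lo where "lo = lo_pos n a"
  define hi where "hi = hi_pos a"
  have lo_hi: "lo \<noteq> hi" using a assms(1) unfolding lo_def hi_def lo_pos_def hi_pos_def by auto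
  have step: "cover_step n a (int a) = int a + 1" "cover_step n a (int a + 1) = int a"
    unfolding cover_step_def using succ_mod_neq[OF assms(1), of "int a"] by simp_all
  \<comment> \<open>the wires swapped by the first letter must cross back, since overall nothing is permuted\<close>
  have "end_pos n w' (int a + 1) < end_pos n w' (int a)"
    using assms(4)[of "int a"] assms(4)[of "int a + 1"] step unfolding w by simp
  then have "(swap_pts lo hi (cyl_pos n (int a)), swap_pts lo hi (cyl_pos n (int a + 1)))
      \<in> cross_right n (id \<circ> swap_pts lo hi) w'"
    using cross_right_of_inversion[OF assms(1) w', of "int a" "int a + 1" "id \<circ> swap_pts lo hi"]
    by simp
  moreover have "cyl_pos n (int a) = lo" "cyl_pos n (int a + 1) = hi"
    unfolding lo_def hi_def using cyl_pos_lo[OF a] cyl_pos_hi[OF a] by simp_all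
  ultimately have "(hi, lo) \<in> cross_right n id w"
    using lo_hi unfolding w by (simp add: swap_pts_def lo_def hi_def)
  moreover have "(lo, hi) \<in> cross_right n id w" unfolding w lo_def hi_def by simp
  ultimately show ?thesis by blast
qed

section \<open>Trajectories of glides\<close>

lemma chamber_label_sublevel:
  fixes E :: "int \<Rightarrow> int"
  assumes n: "0 < n" and periodic: "\<And>p m. E (p + m * int n) = E p + m * int n"
    and i: "1 \<le> i" "i \<le> n"
  shows "chamber_label n {b. E b \<le> E 1} i = (E 1 - E (int i)) div int n + 1"
proof -
  define Q where "Q = (E 1 - E (int i)) div int n"
  have below: "E (int i + q * int n) \<le> E 1 \<longleftrightarrow> q \<le> Q" for q
  proof -
    have "q \<le> Q \<longleftrightarrow> q * int n \<le> E 1 - E (int i)"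
      unfolding Q_def using n
      by (smt (verit, best) minus_div_mult_eq_mod nonzero_mult_div_cancel_right pos_mod_sign
          zdiv_mono1 of_nat_0_less_iff)
    then show ?thesis using periodic by (simp add: add.commute le_diff_eq)
  qed
  have "(GREATEST b. b \<in> {b. E b \<le> E 1} \<and> b mod int n = int i mod int n) = int i + Q * int n"
  proof (rule Greatest_equality)
    fix y assume y: "y \<in> {b. E b \<le> E 1} \<and> y mod int n = int i mod int n"
    then have "int n dvd y - int i" by (metis mod_eq_dvd_iff)
    then obtain q where "y = int i + q * int n" by (metis add.commute diff_add_cancel dvd_def mult.commute)
    with y below show "y \<le> int i + Q * int n" using n by auto
  qed (use below in simp)
  moreover have "\<lceil>real_of_int (int i + Q * int n) / real n\<rceil> = Q + 1"
  proof (rule ceiling_unique)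
    have "real_of_int (int i + Q * int n) / real n = real i / real n + real_of_int Q"
      using n by (simp add: field_simps)
    moreover have "0 < real i / real n" "real i / real n \<le> 1" using n i by auto
    ultimately show "real_of_int (Q + 1) - 1 < real_of_int (int i + Q * int n) / real n"
      and "real_of_int (int i + Q * int n) / real n \<le> real_of_int (Q + 1)" by simp_all
  qed
  ultimately show ?thesis unfolding chamber_label_def Q_def by simp
qed

lemma mult_div_diff_of_mod_eq:
  fixes a b m :: int
  assumes "a mod m = b mod m"
  shows "m * (a div m - b div m) = a - b"
  using assms minus_mod_eq_mult_div[of a m] minus_mod_eq_mult_div[of b m]
  by (simp add: right_diff_distrib)

lemma traj_rep_diff:
  assumes n: "0 < n" and glide: "\<And>p. (end_pos n w p + k) mod int n = p mod int n"
    and t: "traj_rep n w t" and ij: "i \<in> {1..n}" "j \<in> {1..n}"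
  shows "int n * (t i - t j) = (end_pos n w (int j) - int j) - (end_pos n w (int i) - int i)"
proof -
  obtain C where C: "\<forall>i\<in>{1..n}. t i = chamber_label n {b. end_pos n w b \<le> end_pos n w 1} i
      - chamber_label n {b. b \<le> 1} i + C"
    using t unfolding traj_rep_def by blast
  have t_i: "int n * (t i - C) = (end_pos n w 1 - end_pos n w (int i)) - (1 - int i)"
    if i: "i \<in> {1..n}" for i
  proof -
    have "(end_pos n w 1 - end_pos n w (int i)) mod int n
        = ((end_pos n w 1 + k) - (end_pos n w (int i) + k)) mod int n" by simp
    also have "\<dots> = (1 - int i) mod int n" using glide[of 1] glide[of "int i"]
      by (metis mod_diff_eq)
    finally have "(end_pos n w 1 - end_pos n w (int i)) mod int n = (1 - int i) mod int n" .
    moreover have "t i - C = (end_pos n w 1 - end_pos n w (int i)) div int n - (1 - int i) div int n"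
      using C i chamber_label_sublevel[OF n, of "end_pos n w" i] end_pos_periodic
        chamber_label_sublevel[OF n, of "\<lambda>p. p" i] by simp
    ultimately show ?thesis by (simp add: mult_div_diff_of_mod_eq)
  qed
  show ?thesis using t_i[OF ij(1)] t_i[OF ij(2)] by (simp add: algebra_simps)
qed

lemma traj_rep_mono:
  fixes \<alpha> :: "nat \<Rightarrow> 'a::linorder"
  assumes n: "0 < n" and glide: "\<And>p. (end_pos n w p + k) mod int n = p mod int n"
    and t: "traj_rep n w t"
    and inversion: "\<And>x y. x < y \<Longrightarrow> end_pos n w y < end_pos n w x
      \<Longrightarrow> \<alpha> (cyl_pos n x) < \<alpha> (cyl_pos n y)"
  shows "monotone_on {1..n} (\<lambda>i j. \<alpha> i < \<alpha> j) (\<le>) t"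
proof (rule monotone_onI, rule ccontr)
  fix i j assume ij: "i \<in> {1..n}" "j \<in> {1..n}" and "\<alpha> i < \<alpha> j" "\<not> t i \<le> t j"
  then have "i \<noteq> j" "t j < t i" by auto
  let ?E = "end_pos n w"
  have gap: "?E (int j) - int j \<ge> ?E (int i) - int i + int n"
    using traj_rep_diff[OF n glide t ij] \<open>t j < t i\<close>
    by (smt (verit, ccfv_SIG) mult_le_cancel_left1 of_nat_0_less_iff n)
  \<comment> \<open>the copy of wire \<open>i\<close> just above wire \<open>j\<close> ends below it\<close>
  define y where "y = (if j < i then int i else int i + int n)"
  have "?E y - y = ?E (int i) - int i"
    unfolding y_def using end_pos_periodic[of n w "int i" 1] by auto
  moreover have "int j < y" "y < int j + int n" unfolding y_def using ij \<open>i \<noteq> j\<close> by auto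
  ultimately have "\<alpha> (cyl_pos n (int j)) < \<alpha> (cyl_pos n y)"
    using gap by (intro inversion) auto
  moreover have "cyl_pos n y = i" using cyl_pos_cong[of y n "int i"] cyl_pos_of_nat ij
    unfolding y_def by auto
  ultimately show False using \<open>\<alpha> i < \<alpha> j\<close> cyl_pos_of_nat ij by auto
qed

lemma traj_rep_const_translation:
  assumes n: "0 < n" and glide: "\<And>p. (end_pos n w p + k) mod int n = p mod int n"
    and t: "traj_rep n w t" and const: "t constant_on {1..n}"
  shows "end_pos n w p = p + (end_pos n w 1 - 1)"
proof -
  have shift: "end_pos n w (int i) - int i = end_pos n w 1 - 1" if "i \<in> {1..n}" for i
    using traj_rep_diff[OF n glide t that, of 1] const that n unfolding constant_on_def by auto
  obtain m where p: "p = int (cyl_pos n p) + m * int n"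
    using cyl_pos_range[OF n, of p] mod_eq_dvd_iff
    by (metis add.commute diff_add_cancel dvd_def mult.commute)
  have "end_pos n w p = end_pos n w (int (cyl_pos n p)) + m * int n"
    using end_pos_periodic p by metis
  then show ?thesis using shift[of "cyl_pos n p"] cyl_pos_range[OF n, of p] p by auto
qed

lemma traj_rep_right_sorted:
  fixes \<alpha> :: "nat \<Rightarrow> 'a::linorder"
  assumes n: "2 \<le> n" and u: "letters_ok n u" "u \<noteq> []" "glide n u k" and t: "traj_rep n u t"
    and sorted: "\<And>i j. (i, j) \<in> cross_right n id u \<Longrightarrow> \<alpha> i < \<alpha> j"
  shows "monotone_on {1..n} (\<lambda>i j. \<alpha> i < \<alpha> j) (\<le>) t \<and> \<not> t constant_on {1..n}"
proof
  have n0: "0 < n" using n by simp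
  note glide = glide_end_pos_mod[OF n u(1,3)]
  show "monotone_on {1..n} (\<lambda>i j. \<alpha> i < \<alpha> j) (\<le>) t"
    using cross_right_of_inversion[OF n u(1), of _ _ id] sorted
    by (intro traj_rep_mono[OF n0 glide t]) simp
  show "\<not> t constant_on {1..n}"
  proof
    assume "t constant_on {1..n}"
    then obtain x y where "(x, y) \<in> cross_right n id u" "(y, x) \<in> cross_right n id u"
      using translation_double_cross[OF n u(1,2)] traj_rep_const_translation[OF n0 glide t] by metis
    then show False using sorted by (metis order.asym)
  qed
qed

lemma traj_rep_left_sorted:
  fixes \<alpha> :: "nat \<Rightarrow> 'a::linorder"
  assumes n: "2 \<le> n" and v: "letters_ok n v" "v \<noteq> []" "glide n v k"
    and t: "traj_rep n (rho_shift n k v) t"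
    and sorted: "\<And>i j. (i, j) \<in> cross_left n id (rev v) \<Longrightarrow> \<alpha> i < \<alpha> j"
  shows "monotone_on {1..n} (\<lambda>i j. \<alpha> i < \<alpha> j) (\<le>) t \<and> \<not> t constant_on {1..n}"
proof
  have n0: "0 < n" using n by simp
  let ?E = "end_pos n v"
  have shifted: "end_pos n (rho_shift n k v) p = ?E (p + k) - k" for p
    using end_pos_rho_shift[OF n0] .
  have cyl_pos_E: "cyl_pos n (?E (p + k)) = cyl_pos n p" for p
    using glide_end_pos_mod[OF n v(1,3), of "p + k"] mod_add_right_cancel
    by (metis cyl_pos_cong)
  have glide: "(end_pos n (rho_shift n k v) p + k) mod int n = p mod int n" for p
    using glide_end_pos_mod[OF n v(1,3), of "p + k"] mod_add_right_cancel unfolding shifted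
    by auto
  show "monotone_on {1..n} (\<lambda>i j. \<alpha> i < \<alpha> j) (\<le>) t"
  proof (rule traj_rep_mono[OF n0 glide t])
    fix x y :: int assume "x < y" "end_pos n (rho_shift n k v) y < end_pos n (rho_shift n k v) x"
    then have "(cyl_pos n (?E (x + k)), cyl_pos n (?E (y + k))) \<in> cross_left n id (rev v)"
      unfolding shifted by (intro cross_left_rev_of_inversion[OF n v(1)]) auto
    then show "\<alpha> (cyl_pos n x) < \<alpha> (cyl_pos n y)" unfolding cyl_pos_E by (rule sorted)
  qed
  show "\<not> t constant_on {1..n}"
  proof
    assume "t constant_on {1..n}"
    then obtain d where "end_pos n (rho_shift n k v) p = p + d" for p
      using traj_rep_const_translation[OF n0 glide t] by blast
    then have "?E p = p + d" for p using shifted[of "p - k"] by simp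
    then have "end_pos n (rev v) p = p + - d" for p
      using end_pos_rev_inverse[OF n, of v "p - d"] by simp
    then obtain x y where "(x, y) \<in> cross_right n id (rev v)" "(y, x) \<in> cross_right n id (rev v)"
      using translation_double_cross[OF n _ _] v(1,2) by (metis letters_ok_rev rev_is_Nil_conv)
    then have "\<alpha> x < \<alpha> y" "\<alpha> y < \<alpha> x"
      using sorted unfolding cross_left_eq_flip by (metis image_eqI swap_simp)+
    then show False by simp
  qed
qed

section \<open>Speed of a \<open>1\<close>-soliton\<close>

lemma sum_mult_pos_of_sign_sorted:
  fixes L s :: "'a \<Rightarrow> real"
  assumes A: "finite A" and sum_zero: "sum L A = 0" and nonzero: "\<And>j. j \<in> A \<Longrightarrow> L j \<noteq> 0"
    and sorted: "\<And>j k. j \<in> A \<Longrightarrow> k \<in> A \<Longrightarrow> L j < 0 \<Longrightarrow> 0 < L k \<Longrightarrow> s j \<le> s k"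
    and nonconst: "\<not> s constant_on A"
  shows "0 < (\<Sum>j\<in>A. s j * L j)"
proof -
  define N where "N = {j\<in>A. L j < 0}"
  \<comment> \<open>a threshold separating the values of \<open>s\<close> on \<open>N\<close> from those off \<open>N\<close>\<close>
  define s0 where "s0 = (if N = {} then Min (s ` A) else Max (s ` N))"
  have fin: "finite N" unfolding N_def using A by simp
  have below: "s j \<le> s0" if "j \<in> N" for j
    using that fin unfolding s0_def by auto
  have above: "s0 \<le> s j" if "j \<in> A" "j \<notin> N" for j
  proof (cases "N = {}")
    case True
    then show ?thesis unfolding s0_def using that A by auto
  next
    case False
    then obtain j0 where "j0 \<in> N" "Max (s ` N) = s j0" using fin
      by (metis (no_types, lifting) Max_in empty_is_image finite_imageI imageE)
    moreover have "0 < L j" using that nonzero unfolding N_def by force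
    ultimately show ?thesis using sorted[of j0 j] that False unfolding s0_def N_def by auto
  qed
  have nonneg: "0 \<le> (s j - s0) * L j" if "j \<in> A" for j
    using below above that unfolding N_def
    by (cases "j \<in> N") (auto intro: mult_nonpos_nonpos simp: N_def)
  obtain j where j: "j \<in> A" "s j \<noteq> s0" using nonconst unfolding constant_on_def by blast
  have "0 < (s j - s0) * L j"
  proof (cases "j \<in> N")
    case True
    then show ?thesis using below[OF True] j unfolding N_def by (auto intro: mult_neg_neg)
  next
    case False
    then show ?thesis using above[OF j(1) False] j nonzero[OF j(1)] unfolding N_def by auto
  qed
  then have "0 < (\<Sum>j\<in>A. (s j - s0) * L j)"
    using nonneg A j(1) by (intro sum_pos2[where i = j]) auto
  also have "\<dots> = (\<Sum>j\<in>A. s j * L j) - s0 * sum L A"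
    by (simp add: left_diff_distrib sum_subtractf sum_distrib_left)
  finally show ?thesis using sum_zero by simp
qed

lemma connected_component_real_between:
  fixes S :: "real set"
  assumes "connected_component S b c" "min b c \<le> x" "x \<le> max b c"
  shows "x \<in> S"
proof -
  obtain T where "connected T" "T \<subseteq> S" "b \<in> T" "c \<in> T"
    using assms(1) unfolding connected_component_def by blast
  then have "{min b c..max b c} \<subseteq> T" by (intro connected_contains_Icc) (auto simp: min_def max_def)
  then show ?thesis using assms(2,3) \<open>T \<subseteq> S\<close> by auto
qed

lemma soliton_log_sum_pos:
  fixes \<alpha> :: "'a \<Rightarrow> real" and s :: "'a \<Rightarrow> int"
  assumes A: "finite A" and bc: "b < c" and outside: "\<And>j. j \<in> A \<Longrightarrow> \<alpha> j < b \<or> c < \<alpha> j"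
    and soliton: "(\<Prod>j\<in>A. b - \<alpha> j) = (\<Prod>j\<in>A. c - \<alpha> j)"
    and mono: "monotone_on A (\<lambda>i j. \<alpha> i < \<alpha> j) (\<le>) s" and nonconst: "\<not> s constant_on A"
  shows "0 < (\<Sum>j\<in>A. real_of_int (s j) * ln ((b - \<alpha> j) / (c - \<alpha> j)))"
proof -
  define L where "L j = ln ((b - \<alpha> j) / (c - \<alpha> j))" for j
  have L_neg: "L j < 0 \<longleftrightarrow> \<alpha> j < b" and L_pos: "0 < L j \<longleftrightarrow> c < \<alpha> j" if "j \<in> A" for j
    using outside[OF that] bc unfolding L_def by (auto simp: divide_simps)
  have "(\<Sum>j\<in>A. L j) = ln (\<Prod>j\<in>A. (b - \<alpha> j) / (c - \<alpha> j))"
    unfolding L_def using A outside bc by (subst ln_prod) (fastforce simp: divide_simps)+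
  also have "\<dots> = 0"
    using outside bc soliton by (simp add: prod_dividef)
  finally have "(\<Sum>j\<in>A. L j) = 0" .
  moreover have "L j \<noteq> 0" if "j \<in> A" for j using L_neg[OF that] L_pos[OF that] outside[OF that] by auto
  moreover have "real_of_int (s j) \<le> real_of_int (s k)"
    if "j \<in> A" "k \<in> A" "L j < 0" "0 < L k" for j k
    using mono that L_neg L_pos bc unfolding monotone_on_def by fastforce
  moreover have "\<not> (\<lambda>j. real_of_int (s j)) constant_on A"
    using nonconst unfolding constant_on_def by (metis of_int_eq_iff)
  ultimately show ?thesis
    using sum_mult_pos_of_sign_sorted[OF A, of L "\<lambda>j. real_of_int (s j)"] unfolding L_def by blast
qed

lemma soliton_speed_pos:
  fixes \<alpha> :: "'a \<Rightarrow> real" and s s' :: "'a \<Rightarrow> int"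
  assumes A: "finite A" and "b \<noteq> c"
    and outside: "\<And>j. j \<in> A \<Longrightarrow> \<alpha> j < min b c \<or> max b c < \<alpha> j"
    and soliton: "(\<Prod>j\<in>A. b - \<alpha> j) = (\<Prod>j\<in>A. c - \<alpha> j)"
    and s: "monotone_on A (\<lambda>i j. \<alpha> i < \<alpha> j) (\<le>) s" "\<not> s constant_on A"
    and s': "monotone_on A (\<lambda>i j. \<alpha> i < \<alpha> j) (\<le>) s'" "\<not> s' constant_on A"
  shows "0 < (\<Sum>j\<in>A. real_of_int (s' j) * ln ((b - \<alpha> j) / (c - \<alpha> j)))
           / (\<Sum>j\<in>A. real_of_int (s j) * ln ((b - \<alpha> j) / (c - \<alpha> j)))"
proof (cases "b < c")
  case True
  then have "\<alpha> j < b \<or> c < \<alpha> j" if "j \<in> A" for j using outside[OF that] by simp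
  then show ?thesis using soliton_log_sum_pos[OF A True _ soliton] s s' by simp
next
  case False
  then have cb: "c < b" using \<open>b \<noteq> c\<close> by simp
  have swap: "(\<Sum>j\<in>A. real_of_int (r j) * ln ((b - \<alpha> j) / (c - \<alpha> j)))
      = - (\<Sum>j\<in>A. real_of_int (r j) * ln ((c - \<alpha> j) / (b - \<alpha> j)))" for r :: "'a \<Rightarrow> int"
    using ln_inverse[of "(c - \<alpha> _) / (b - \<alpha> _)"] by (simp add: sum_negf)
  have "\<alpha> j < c \<or> b < \<alpha> j" if "j \<in> A" for j using outside[OF that] cb by simp
  then show ?thesis
    using soliton_log_sum_pos[OF A cb _ soliton[symmetric]] s s' unfolding swap
    by (simp add: divide_pos_pos)
qed

theorem proposition8p5:
  fixes n :: nat and u v :: "nat list" and k2 :: int and \<alpha> :: "nat \<Rightarrow> real"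
    and b c :: real and t t' :: "nat \<Rightarrow> int"
  assumes "n \<ge> 3"
    and "u \<noteq> []" and "v \<noteq> []"
    and "reduced_word n u" and "reduced_word n v" and "reduced_word n (v @ u)"
    and "\<exists>k1. glide n u k1" and "glide n v k2"
    and "\<forall>i j. wire_tri n v u i j \<longrightarrow> \<alpha> i < \<alpha> j"
    and "traj_rep n u t" and "traj_rep n (rho_shift n k2 v) t'"
    and "b \<noteq> c" and "connected_component (UNIV - \<alpha> ` {1..n}) b c"
    and "(\<Prod>j=1..n. b - \<alpha> j) = (\<Prod>j=1..n. c - \<alpha> j)"
  shows "(\<Sum>j=1..n. real_of_int (t' j) * ln ((b - \<alpha> j) / (c - \<alpha> j)))
         / (\<Sum>j=1..n. real_of_int (t j) * ln ((b - \<alpha> j) / (c - \<alpha> j))) > 0"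
proof -
  have n: "2 \<le> n" using assms(1) by simp
  have letters: "letters_ok n u" "letters_ok n v"
    using assms(4,5) unfolding reduced_word_def by blast+
  obtain k1 where "glide n u k1" using assms(7) by blast
  have "monotone_on {1..n} (\<lambda>i j. \<alpha> i < \<alpha> j) (\<le>) t \<and> \<not> t constant_on {1..n}"
    using assms(9) unfolding wire_tri_def
    by (intro traj_rep_right_sorted[OF n letters(1) assms(2) \<open>glide n u k1\<close> assms(10)]) blast
  moreover have "monotone_on {1..n} (\<lambda>i j. \<alpha> i < \<alpha> j) (\<le>) t' \<and> \<not> t' constant_on {1..n}"
    using assms(9) unfolding wire_tri_def
    by (intro traj_rep_left_sorted[OF n letters(2) assms(3,8,11)]) blast
  moreover have "\<alpha> j < min b c \<or> max b c < \<alpha> j" if "j \<in> {1..n}" for j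
    using connected_component_real_between[OF assms(13), of "\<alpha> j"] that by fastforce
  ultimately show ?thesis
    using soliton_speed_pos[of "{1..n}" b c \<alpha> t t'] assms(12,14) by auto
qed

end
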